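(* There is a constant $\epsilon_0>0$ such that for every $0<\epsilon\le\epsilon_0$ and all sufficiently large $n$, for all but an $o(1)$ fraction of the subsets $P\subseteq\{0,1\}^n$ with $|P|=2^{n/20}$, no quantum property tester for $P$ with distance parameter $\epsilon$ makes at most $n/400$ queries. In particular, most properties with $2^{n/20}$ elements require quantum property testers with $\Omega(n)$ queries.
   Context: $x\in\{0,1\}^n$ is $\epsilon$-far from $P$ if it differs from every element of $P$ in more than $\epsilon n$ positions. A quantum property tester for $P$ with distance parameter $\epsilon$ is a quantum algorithm accessing $x$ through the oracle $O_x:\lvert i,b,z\rangle\mapsto\lvert i,b\oplus x_i,z\rangle$ that accepts every $x\in P$ with probability $\ge2/3$ and every $\epsilon$-far $x$ with probability $\le1/3$; its complexity is the number of oracle queries. *)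

theory Defs
  imports Complex_Main
begin

(* Inputs x in {0,1}^n are boolean lists of length n (True = 1).
 The Hilbert space of a query algorithm with workspace dimension m has
 computational basis |i,b,z> with i < n, b a bit, z < m.*)

type_synonym qbasis = "nat \<times> bool \<times> nat"
type_synonym qvec = "qbasis \<Rightarrow> complex"
type_synonym qmat = "qbasis \<Rightarrow> qbasis \<Rightarrow> complex"

definition cube :: "nat \<Rightarrow> bool list set" where
  "cube n = {x. length x = n}"

definition hamming :: "nat \<Rightarrow> bool list \<Rightarrow> bool list \<Rightarrow> nat" where
  "hamming n x y = card {i. i < n \<and> x ! i \<noteq> y ! i}"

definition eps_far :: "nat \<Rightarrow> real \<Rightarrow> bool list set \<Rightarrow> bool list \<Rightarrow> bool" where
  "eps_far n \<epsilon> P x \<longleftrightarrow> (\<forall>y\<in>P. real (hamming n x y) > \<epsilon> * real n)"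

definition qbase :: "nat \<Rightarrow> nat \<Rightarrow> qbasis set" where
  "qbase n m = {0..<n} \<times> UNIV \<times> {0..<m}"

definition mat_app :: "qbasis set \<Rightarrow> qmat \<Rightarrow> qvec \<Rightarrow> qvec" where
  "mat_app B U v = (\<lambda>s. if s \<in> B then (\<Sum>t\<in>B. U s t * v t) else 0)"

definition unitary_on :: "qbasis set \<Rightarrow> qmat \<Rightarrow> bool" where
  "unitary_on B U \<longleftrightarrow>
     (\<forall>s\<in>B. \<forall>t\<in>B. (\<Sum>r\<in>B. cnj (U r s) * U r t) = (if s = t then 1 else 0))"

definition query_op :: "bool list \<Rightarrow> qvec \<Rightarrow> qvec" where
  "query_op x v = (\<lambda>(i, b, z). v (i, b \<noteq> x ! i, z))"

definition init_state :: qvec where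
  "init_state = (\<lambda>s. if s = (0, False, 0) then 1 else 0)"

fun qstate :: "nat \<Rightarrow> nat \<Rightarrow> (nat \<Rightarrow> qmat) \<Rightarrow> bool list \<Rightarrow> nat \<Rightarrow> qvec" where
  "qstate n m U x 0 = mat_app (qbase n m) (U 0) init_state"
| "qstate n m U x (Suc k) = mat_app (qbase n m) (U (Suc k)) (query_op x (qstate n m U x k))"

definition accept_prob ::
  "nat \<Rightarrow> nat \<Rightarrow> (nat \<Rightarrow> qmat) \<Rightarrow> qbasis set \<Rightarrow> nat \<Rightarrow> bool list \<Rightarrow> real" where
  "accept_prob n m U Acc T x = (\<Sum>s\<in>qbase n m \<inter> Acc. (cmod (qstate n m U x T s))\<^sup>2)"

definition quantum_tester ::
  "nat \<Rightarrow> bool list set \<Rightarrow> real \<Rightarrow> nat \<Rightarrow> (nat \<Rightarrow> qmat) \<Rightarrow> qbasis set \<Rightarrow> nat \<Rightarrow> bool" where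
  "quantum_tester n P \<epsilon> m U Acc T \<longleftrightarrow>
     m \<ge> 1 \<and> (\<forall>k\<le>T. unitary_on (qbase n m) (U k)) \<and>
     (\<forall>x\<in>cube n. x \<in> P \<longrightarrow> accept_prob n m U Acc T x \<ge> 2/3) \<and>
     (\<forall>x\<in>cube n. eps_far n \<epsilon> P x \<longrightarrow> accept_prob n m U Acc T x \<le> 1/3)"

definition has_tester_with_queries :: "nat \<Rightarrow> bool list set \<Rightarrow> real \<Rightarrow> real \<Rightarrow> bool" where
  "has_tester_with_queries n P \<epsilon> q \<longleftrightarrow>
     (\<exists>m U Acc T. real T \<le> q \<and> quantum_tester n P \<epsilon> m U Acc T)"

definition props_of_size :: "nat \<Rightarrow> nat \<Rightarrow> bool list set set" where
  "props_of_size n k = {P. P \<subseteq> cube n \<and> card P = k}"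

end

(* Polynomial method: the acceptance probability of a T-query algorithm is a real multilinear
   polynomial of degree at most 2T in the input bits, so the inputs it accepts with probability
   above 1/2 form a threshold set S of a polynomial of degree at most 2T. Such threshold sets
   have VC dimension at most the number D of monomials of degree at most 2T (Dudley), hence by
   the Sauer-Shelah-Pajor lemma there are at most 3 (2^n)^D of them. A tester for P has P a
   subset of S, and S inside the union of the Hamming balls of radius eps n around P, so
   |S| <= |P| |ball|. Thus a testable P of size K is a K-subset of one of few small sets, and at
   most 3 (2^n)^D (K |ball|)^K of the at least (2^n/K)^K properties of size K are testable.
   For K = 2^(n/20), T <= n/400 and eps <= 1/100 this fraction is at most
   2^(n 2^(153 n / 3200) - n 2^(n/20) / 4), which tends to 0. *)

theory Submission
  imports Defs "HOL-Analysis.Analysis" "HOL-Real_Asymp.Real_Asymp"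
begin

section \<open>Multilinear polynomials on the Boolean cube\<close>

definition cube_monomial :: "nat set \<Rightarrow> bool list \<Rightarrow> 'a::comm_ring_1" where
  "cube_monomial S x = of_bool (\<forall>i\<in>S. x ! i)"

definition index_sets_le :: "nat \<Rightarrow> nat \<Rightarrow> nat set set" where
  "index_sets_le n d = {S. S \<subseteq> {..<n} \<and> card S \<le> d}"

definition cube_degree_le :: "nat \<Rightarrow> nat \<Rightarrow> (bool list \<Rightarrow> 'a::comm_ring_1) \<Rightarrow> bool" where
  "cube_degree_le n d f \<longleftrightarrow>
     (\<exists>c. \<forall>x\<in>cube n. f x = (\<Sum>S\<in>index_sets_le n d. c S * cube_monomial S x))"

lemma finite_index_sets_le: "finite (index_sets_le n d)"
  unfolding index_sets_le_def by (rule finite_subset[of _ "Pow {..<n}"]) auto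

lemma empty_in_index_sets_le: "{} \<in> index_sets_le n d"
  by (simp add: index_sets_le_def)

lemma cube_monomial_empty [simp]: "cube_monomial {} x = 1"
  by (simp add: cube_monomial_def)

lemma cube_monomial_Un: "cube_monomial (S \<union> T) x = cube_monomial S x * cube_monomial T x"
  by (simp add: cube_monomial_def of_bool_conj[symmetric] ball_Un)

lemma cube_monomial_complex [simp]:
  "cnj (cube_monomial S x) = cube_monomial S x"
  "Re (cube_monomial S x) = cube_monomial S x"
  "Im (cube_monomial S x) = 0"
  by (simp_all add: cube_monomial_def)

lemma cube_degree_le_cong:
  "cube_degree_le n d f \<Longrightarrow> (\<And>x. x \<in> cube n \<Longrightarrow> f x = g x) \<Longrightarrow> cube_degree_le n d g"
  unfolding cube_degree_le_def by metis

lemma cube_degree_le_monomial: "S \<in> index_sets_le n d \<Longrightarrow> cube_degree_le n d (cube_monomial S)"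
  unfolding cube_degree_le_def
  by (rule exI[of _ "\<lambda>T. of_bool (T = S)"])
     (simp add: of_bool_def if_distrib[of "\<lambda>a. a * _"] finite_index_sets_le cong: if_cong)

lemma cube_degree_le_add:
  assumes "cube_degree_le n d f" "cube_degree_le n d g"
  shows "cube_degree_le n d (\<lambda>x. f x + g x)"
proof -
  from assms obtain c c' where
    "\<forall>x\<in>cube n. f x = (\<Sum>S\<in>index_sets_le n d. c S * cube_monomial S x)"
    "\<forall>x\<in>cube n. g x = (\<Sum>S\<in>index_sets_le n d. c' S * cube_monomial S x)"
    unfolding cube_degree_le_def by blast
  then show ?thesis
    unfolding cube_degree_le_def
    by (intro exI[of _ "\<lambda>S. c S + c' S"]) (simp add: distrib_right sum.distrib)
qed

lemma cube_degree_le_scale: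
  assumes "cube_degree_le n d f"
  shows "cube_degree_le n d (\<lambda>x. a * f x)"
proof -
  from assms obtain c where "\<forall>x\<in>cube n. f x = (\<Sum>S\<in>index_sets_le n d. c S * cube_monomial S x)"
    unfolding cube_degree_le_def by blast
  then show ?thesis
    unfolding cube_degree_le_def
    by (intro exI[of _ "\<lambda>S. a * c S"]) (simp add: sum_distrib_left mult.assoc)
qed

lemma cube_degree_le_const: "cube_degree_le n d (\<lambda>x. a)"
  using cube_degree_le_scale[OF cube_degree_le_monomial[OF empty_in_index_sets_le], of n d a]
  by simp

lemma cube_degree_le_sum:
  "(\<And>i. i \<in> I \<Longrightarrow> cube_degree_le n d (f i)) \<Longrightarrow> cube_degree_le n d (\<lambda>x. \<Sum>i\<in>I. f i x)"
proof (induction I rule: infinite_finite_induct)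
  case (insert i I)
  then show ?case by (simp add: cube_degree_le_add)
qed (simp_all add: cube_degree_le_const)

lemma cube_degree_le_diff:
  "cube_degree_le n d f \<Longrightarrow> cube_degree_le n d g \<Longrightarrow> cube_degree_le n d (\<lambda>x. f x - g x)"
  using cube_degree_le_add[of n d f "\<lambda>x. (-1) * g x"] cube_degree_le_scale[of n d g "-1"] by simp

lemma cube_degree_le_polynomial:
  "I \<subseteq> index_sets_le n d \<Longrightarrow> cube_degree_le n d (\<lambda>x. \<Sum>S\<in>I. c S * cube_monomial S x)"
  by (intro cube_degree_le_sum cube_degree_le_scale cube_degree_le_monomial) auto

lemma cube_degree_le_mono:
  assumes "cube_degree_le n d f" "d \<le> d'"
  shows "cube_degree_le n d' f"
proof -
  from assms(1) obtain c where c: "\<forall>x\<in>cube n. f x = (\<Sum>S\<in>index_sets_le n d. c S * cube_monomial S x)"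
    unfolding cube_degree_le_def by blast
  have "index_sets_le n d \<subseteq> index_sets_le n d'"
    using assms(2) by (auto simp: index_sets_le_def)
  then show ?thesis
    by (rule cube_degree_le_cong[OF cube_degree_le_polynomial]) (simp add: c)
qed

lemma cube_degree_le_mult:
  assumes "cube_degree_le n d f" "cube_degree_le n e g"
  shows "cube_degree_le n (d + e) (\<lambda>x. f x * g x)"
proof -
  from assms obtain c c' where
    c: "\<forall>x\<in>cube n. f x = (\<Sum>S\<in>index_sets_le n d. c S * cube_monomial S x)" and
    c': "\<forall>x\<in>cube n. g x = (\<Sum>S\<in>index_sets_le n e. c' S * cube_monomial S x)"
    unfolding cube_degree_le_def by blast
  have "cube_degree_le n (d + e) (\<lambda>x. \<Sum>S\<in>index_sets_le n d. \<Sum>T\<in>index_sets_le n e.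
          (c S * c' T) * cube_monomial (S \<union> T) x)"
  proof (intro cube_degree_le_sum cube_degree_le_scale cube_degree_le_monomial)
    fix S T assume "S \<in> index_sets_le n d" "T \<in> index_sets_le n e"
    then show "S \<union> T \<in> index_sets_le n (d + e)"
      unfolding index_sets_le_def using card_Un_le[of S T] by auto
  qed
  moreover have "(\<Sum>S\<in>index_sets_le n d. \<Sum>T\<in>index_sets_le n e.
      (c S * c' T) * cube_monomial (S \<union> T) x) = f x * g x" if "x \<in> cube n" for x
  proof -
    have "f x * g x = (\<Sum>S\<in>index_sets_le n d. \<Sum>T\<in>index_sets_le n e.
        (c S * cube_monomial S x) * (c' T * cube_monomial T x))"
      using c c' that by (simp add: sum_product)
    then show ?thesis
      by (simp add: cube_monomial_Un mult_ac)
  qed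
  ultimately show ?thesis
    by (rule cube_degree_le_cong)
qed

lemma cube_degree_le_cnj:
  assumes "cube_degree_le n d f"
  shows "cube_degree_le n d (\<lambda>x. cnj (f x))"
proof -
  from assms obtain c where "\<forall>x\<in>cube n. f x = (\<Sum>S\<in>index_sets_le n d. c S * cube_monomial S x)"
    unfolding cube_degree_le_def by blast
  then show ?thesis
    unfolding cube_degree_le_def
    by (intro exI[of _ "\<lambda>S. cnj (c S)"]) simp
qed

lemma cube_degree_le_Re:
  fixes f :: "bool list \<Rightarrow> complex"
  assumes "cube_degree_le n d f"
  shows "cube_degree_le n d (\<lambda>x. Re (f x))"
proof -
  from assms obtain c where "\<forall>x\<in>cube n. f x = (\<Sum>S\<in>index_sets_le n d. c S * cube_monomial S x)"
    unfolding cube_degree_le_def by blast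
  then show ?thesis
    unfolding cube_degree_le_def
    by (intro exI[of _ "\<lambda>S. Re (c S)"]) (simp add: Re_sum)
qed

lemma cube_degree_le_if_bit:
  assumes "i < n" "cube_degree_le n d f" "cube_degree_le n d g"
  shows "cube_degree_le n (Suc d) (\<lambda>x. if x ! i then f x else g x)"
proof -
  have "{i} \<in> index_sets_le n 1"
    using assms(1) by (simp add: index_sets_le_def)
  then have "cube_degree_le n (Suc d) (\<lambda>x. g x + cube_monomial {i} x * (f x - g x))"
    using cube_degree_le_mono[OF assms(3), of "Suc d"]
    by (intro cube_degree_le_add cube_degree_le_mult[where d = 1, simplified]
          cube_degree_le_monomial cube_degree_le_diff assms) auto
  then show ?thesis
    by (rule cube_degree_le_cong) (simp add: cube_monomial_def)
qed

lemma cube_degree_le_qstate: "cube_degree_le n k (\<lambda>x. qstate n m U x k s)"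
proof (induction k arbitrary: s)
  case 0
  show ?case by (simp add: cube_degree_le_const)
next
  case (Suc k)
  have "cube_degree_le n (Suc k) (\<lambda>x. query_op x (qstate n m U x k) t)" if "t \<in> qbase n m" for t
  proof -
    obtain i b z where t: "t = (i, b, z)" and "i < n"
      using \<open>t \<in> qbase n m\<close> by (cases t) (auto simp: qbase_def)
    then have "cube_degree_le n (Suc k)
        (\<lambda>x. if x ! i then qstate n m U x k (i, \<not> b, z) else qstate n m U x k (i, b, z))"
      by (intro cube_degree_le_if_bit Suc.IH)
    then show ?thesis
      by (rule cube_degree_le_cong) (auto simp: query_op_def t)
  qed
  then show ?case
    unfolding qstate.simps mat_app_def
    by (cases "s \<in> qbase n m") (simp_all add: cube_degree_le_sum cube_degree_le_scale cube_degree_le_const)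
qed

lemma cube_degree_le_accept_prob: "cube_degree_le n (2 * T) (accept_prob n m U Acc T)"
proof -
  have "cube_degree_le n (2 * T)
      (\<lambda>x. \<Sum>s\<in>qbase n m \<inter> Acc. qstate n m U x T s * cnj (qstate n m U x T s))"
    using cube_degree_le_mult[OF cube_degree_le_qstate cube_degree_le_cnj[OF cube_degree_le_qstate]]
    by (intro cube_degree_le_sum) (simp add: mult_2)
  then have "cube_degree_le n (2 * T)
      (\<lambda>x. Re (\<Sum>s\<in>qbase n m \<inter> Acc. qstate n m U x T s * cnj (qstate n m U x T s)))"
    by (rule cube_degree_le_Re)
  then show ?thesis
    by (rule cube_degree_le_cong)
       (simp add: accept_prob_def complex_norm_square[symmetric] flip: of_real_power)
qed

section \<open>Shattering and linear threshold sets\<close>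

lemma homogeneous_system_nontrivial_solution:
  fixes a :: "'e \<Rightarrow> 'v \<Rightarrow> 'a::field"
  assumes "finite E" "finite V" "card E < card V"
  shows "\<exists>l. (\<exists>v\<in>V. l v \<noteq> 0) \<and> (\<forall>e\<in>E. (\<Sum>v\<in>V. a e v * l v) = 0)"
  using assms
proof (induction E arbitrary: V a rule: finite_induct)
  case empty
  then obtain v where "v \<in> V" by fastforce
  then show ?case by (intro exI[of _ "\<lambda>_. 1"]) auto
next
  case (insert e E)
  show ?case
  proof (cases "\<forall>v\<in>V. a e v = 0")
    case True
    then show ?thesis
      using insert.IH[of V a] insert.prems insert.hyps by auto
  next
    case False
    then obtain v0 where v0: "v0 \<in> V" "a e v0 \<noteq> 0" by blast
    define V' where "V' = V - {v0}"
    text \<open>Gaussian elimination of the unknown at \<open>v0\<close> using equation \<open>e\<close>.\<close>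
    define a' where "a' e' v = a e' v - a e' v0 * a e v / a e v0" for e' v
    have "card E < card V'"
      using v0 insert.prems insert.hyps by (simp add: V'_def)
    then obtain l where l: "\<exists>v\<in>V'. l v \<noteq> 0" "\<forall>e'\<in>E. (\<Sum>v\<in>V'. a' e' v * l v) = 0"
      using insert.IH[of V' a'] insert.prems by (auto simp: V'_def)
    define l' where "l' v = (if v = v0 then - (\<Sum>v\<in>V'. a e v * l v) / a e v0 else l v)" for v
    have split: "(\<Sum>v\<in>V. b v * l' v) = b v0 * l' v0 + (\<Sum>v\<in>V'. b v * l v)" for b
    proof -
      have "(\<Sum>v\<in>V'. b v * l' v) = (\<Sum>v\<in>V'. b v * l v)"
        by (rule sum.cong) (auto simp: l'_def V'_def)
      then show ?thesis
        using v0(1) insert.prems(1) by (simp add: V'_def sum.remove)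
    qed
    have "(\<Sum>v\<in>V. a e v * l' v) = 0"
      unfolding split using v0(2) by (simp add: l'_def)
    moreover have "(\<Sum>v\<in>V. a e' v * l' v) = 0" if "e' \<in> E" for e'
    proof -
      have "(\<Sum>v\<in>V. a e' v * l' v) = (\<Sum>v\<in>V'. a' e' v * l v)"
        unfolding split using v0(2)
        by (simp add: l'_def a'_def algebra_simps sum_subtractf sum_distrib_left sum_divide_distrib)
      then show ?thesis using l(2) that by simp
    qed
    moreover have "\<exists>v\<in>V. l' v \<noteq> 0"
      using l(1) by (auto simp: l'_def V'_def)
    ultimately show ?thesis by auto
  qed
qed

definition shatters :: "'a set set \<Rightarrow> 'a set \<Rightarrow> bool" where
  "shatters F Y \<longleftrightarrow> (\<forall>Z\<subseteq>Y. \<exists>A\<in>F. A \<inter> Y = Z)"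

lemma card_eq_card_remove_plus_card_pairs:
  assumes "finite F"
  shows "card F = card ((\<lambda>A. A - {x}) ` F) + card {A \<in> F. x \<notin> A \<and> insert x A \<in> F}"
proof -
  define G where "G = {A \<in> F. x \<in> A \<or> insert x A \<notin> F}"
  define F1 where "F1 = {A \<in> F. x \<notin> A \<and> insert x A \<in> F}"
  have same_x: "x \<in> B" if "A \<in> G" "B \<in> G" "A - {x} = B - {x}" "x \<in> A" for A B
  proof (rule ccontr)
    assume "x \<notin> B"
    then have "insert x B = A"
      using that(3,4) by blast
    then show False
      using that(1,2) \<open>x \<notin> B\<close> by (auto simp: G_def)
  qed
  have "inj_on (\<lambda>A. A - {x}) G"
  proof (rule inj_onI)
    fix A B assume "A \<in> G" "B \<in> G" "A - {x} = B - {x}"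
    moreover from this have "x \<in> A \<longleftrightarrow> x \<in> B"
      using same_x by metis
    ultimately show "A = B" by blast
  qed
  moreover have "(\<lambda>A. A - {x}) ` G = (\<lambda>A. A - {x}) ` F"
  proof (intro equalityI subsetI)
    fix C assume "C \<in> (\<lambda>A. A - {x}) ` F"
    then obtain A where A: "A \<in> F" "C = A - {x}" by blast
    show "C \<in> (\<lambda>A. A - {x}) ` G"
    proof (cases "A \<in> G")
      case False
      then have "insert x A \<in> G" "C = insert x A - {x}"
        using A by (auto simp: G_def)
      then show ?thesis by blast
    qed (use A in blast)
  qed (auto simp: G_def)
  moreover have "F = G \<union> F1" "G \<inter> F1 = {}"
    by (auto simp: G_def F1_def)
  ultimately show ?thesis
    using assms by (metis F1_def card_Un_disjoint card_image finite_Un)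
qed

lemma shatters_remove:
  assumes "shatters ((\<lambda>A. A - {x}) ` F) Y" "x \<notin> Y"
  shows "shatters F Y"
  unfolding shatters_def
proof (intro allI impI)
  fix Z assume "Z \<subseteq> Y"
  then obtain A where "A \<in> F" "(A - {x}) \<inter> Y = Z"
    using assms(1) unfolding shatters_def by blast
  then show "\<exists>A\<in>F. A \<inter> Y = Z"
    using assms(2) by (intro bexI[of _ A]) auto
qed

lemma shatters_pairs:
  assumes "shatters {A \<in> F. x \<notin> A \<and> insert x A \<in> F} Y" "x \<notin> Y"
  shows "shatters F (insert x Y)"
  unfolding shatters_def
proof (intro allI impI)
  fix Z assume "Z \<subseteq> insert x Y"
  then have "Z - {x} \<subseteq> Y" by auto
  then obtain B where B: "B \<in> F" "x \<notin> B" "insert x B \<in> F" "B \<inter> Y = Z - {x}"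
    using assms(1) unfolding shatters_def by blast
  show "\<exists>A\<in>F. A \<inter> insert x Y = Z"
  proof (cases "x \<in> Z")
    case True
    then show ?thesis using B by (intro bexI[of _ "insert x B"]) auto
  next
    case False
    then show ?thesis using B by (intro bexI[of _ B]) auto
  qed
qed

lemma card_le_card_shattered:
  assumes "finite X" "F \<subseteq> Pow X"
  shows "card F \<le> card {Y. Y \<subseteq> X \<and> shatters F Y}"
  using assms
proof (induction X arbitrary: F rule: finite_induct)
  case empty
  show ?case
  proof (cases "F = {}")
    case False
    then have "{Y. Y \<subseteq> {} \<and> shatters F Y} = {{}}"
      by (auto simp: shatters_def)
    moreover have "card F \<le> 1"
      using empty card_mono[of "{{}}" F] by auto
    ultimately show ?thesis by simp
  qed simp
next
  case (insert x X)
  define F0 where "F0 = (\<lambda>A. A - {x}) ` F"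
  define F1 where "F1 = {A \<in> F. x \<notin> A \<and> insert x A \<in> F}"
  define S where "S = {Y. Y \<subseteq> insert x X \<and> shatters F Y}"
  have "finite F"
    using insert.prems insert.hyps(1) by (metis finite_Pow_iff finite_insert finite_subset)
  then have "card F = card F0 + card F1"
    unfolding F0_def F1_def by (rule card_eq_card_remove_plus_card_pairs)
  also have "\<dots> \<le> card {Y. Y \<subseteq> X \<and> shatters F0 Y} + card {Y. Y \<subseteq> X \<and> shatters F1 Y}"
  proof (rule add_mono)
    show "card F0 \<le> card {Y. Y \<subseteq> X \<and> shatters F0 Y}"
      by (rule insert.IH) (use insert.prems in \<open>auto simp: F0_def\<close>)
    show "card F1 \<le> card {Y. Y \<subseteq> X \<and> shatters F1 Y}"
      by (rule insert.IH) (use insert.prems in \<open>auto simp: F1_def\<close>)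
  qed
  also have "\<dots> = card ({Y. Y \<subseteq> X \<and> shatters F0 Y} \<union> insert x ` {Y. Y \<subseteq> X \<and> shatters F1 Y})"
  proof -
    have "inj_on (insert x) {Y. Y \<subseteq> X \<and> shatters F1 Y}"
      using insert.hyps(2) by (intro inj_onI) (metis Diff_insert_absorb mem_Collect_eq subset_iff)
    then show ?thesis
      using insert.hyps by (subst card_Un_disjoint) (auto simp: card_image)
  qed
  also have "\<dots> \<le> card S"
    using insert.hyps shatters_remove[of x F] shatters_pairs[of F x]
    by (intro card_mono) (auto simp: S_def F0_def F1_def)
  finally show ?case unfolding S_def .
qed

definition linear_threshold_sets :: "'a set \<Rightarrow> 'b set \<Rightarrow> ('b \<Rightarrow> 'a \<Rightarrow> real) \<Rightarrow> 'a set set" where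
  "linear_threshold_sets X B \<phi> = range (\<lambda>c. {x \<in> X. 0 < (\<Sum>b\<in>B. c b * \<phi> b x)})"

text \<open>Dudley's argument: a linear dependency \<open>l\<close> among the evaluation functionals on \<open>Y\<close>
  is orthogonal to every function of the space, so no such function has the sign pattern of \<open>l\<close>.\<close>

lemma card_shattered_by_linear_threshold_sets_le:
  assumes "finite B" "finite Y" "Y \<subseteq> X" "shatters (linear_threshold_sets X B \<phi>) Y"
  shows "card Y \<le> card B"
proof (rule ccontr)
  assume "\<not> card Y \<le> card B"
  then obtain l0 where l0: "\<exists>y\<in>Y. l0 y \<noteq> 0" "\<forall>b\<in>B. (\<Sum>y\<in>Y. \<phi> b y * l0 y) = 0"
    using homogeneous_system_nontrivial_solution[OF assms(1,2), of \<phi>] by auto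
  obtain l where l: "\<exists>y\<in>Y. 0 < l y" "\<forall>b\<in>B. (\<Sum>y\<in>Y. \<phi> b y * l y) = 0"
  proof (cases "\<exists>y\<in>Y. 0 < l0 y")
    case True
    then show ?thesis using that l0(2) by blast
  next
    case False
    with l0(1) have "\<exists>y\<in>Y. 0 < - l0 y"
      by (meson linorder_neqE_linordered_idom neg_0_less_iff_less)
    moreover have "\<forall>b\<in>B. (\<Sum>y\<in>Y. \<phi> b y * - l0 y) = 0"
      using l0(2) by (simp add: sum_negf)
    ultimately show ?thesis by (rule that)
  qed
  have "{y \<in> Y. 0 < l y} \<subseteq> Y" by blast
  then obtain A where A: "A \<in> linear_threshold_sets X B \<phi>" "A \<inter> Y = {y \<in> Y. 0 < l y}"
    using assms(4) unfolding shatters_def by blast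
  then obtain c where c: "A = {x \<in> X. 0 < (\<Sum>b\<in>B. c b * \<phi> b x)}"
    unfolding linear_threshold_sets_def by auto
  define g where "g y = (\<Sum>b\<in>B. c b * \<phi> b y)" for y
  have sign: "0 < g y \<longleftrightarrow> 0 < l y" if "y \<in> Y" for y
  proof -
    have "y \<in> A \<longleftrightarrow> 0 < l y"
      using A(2) that by blast
    moreover have "y \<in> A \<longleftrightarrow> 0 < g y"
      using c that assms(3) by (auto simp: g_def)
    ultimately show ?thesis by simp
  qed
  have "(\<Sum>y\<in>Y. l y * g y) = (\<Sum>b\<in>B. c b * (\<Sum>y\<in>Y. \<phi> b y * l y))"
    by (simp add: g_def sum_distrib_left sum_distrib_right sum.swap[of _ Y] mult_ac)
  also have "\<dots> = 0"
    using l(2) by simp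
  finally have "(\<Sum>y\<in>Y. l y * g y) = 0" .
  moreover have "0 < (\<Sum>y\<in>Y. l y * g y)"
  proof -
    obtain y0 where "y0 \<in> Y" "0 < l y0"
      using l(1) by blast
    moreover have "0 \<le> l y * g y" if "y \<in> Y" for y
      using sign[OF that] by (cases "0 < l y") (auto intro: mult_nonpos_nonpos simp: not_less)
    ultimately show ?thesis
      using sign by (intro sum_pos2[OF assms(2)]) auto
  qed
  ultimately show False by simp
qed

lemma card_linear_threshold_sets_le:
  assumes "finite X" "finite B"
  shows "card (linear_threshold_sets X B \<phi>) \<le> card {Y. Y \<subseteq> X \<and> card Y \<le> card B}"
proof -
  have "card (linear_threshold_sets X B \<phi>)
      \<le> card {Y. Y \<subseteq> X \<and> shatters (linear_threshold_sets X B \<phi>) Y}"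
    using assms(1) by (rule card_le_card_shattered) (auto simp: linear_threshold_sets_def)
  also have "\<dots> \<le> card {Y. Y \<subseteq> X \<and> card Y \<le> card B}"
    using assms card_shattered_by_linear_threshold_sets_le[of B _ X \<phi>]
    by (intro card_mono) (auto intro: finite_subset)
  finally show ?thesis .
qed

section \<open>Counting small subsets\<close>

lemma card_subsets_card_le:
  assumes "finite A" "0 < t" "t \<le> 1"
  shows "real (card {S. S \<subseteq> A \<and> card S \<le> d}) \<le> (1 + t) ^ card A / t ^ d"
proof -
  have "real (card {S. S \<subseteq> A \<and> card S \<le> d}) = (\<Sum>S\<in>{S. S \<subseteq> A \<and> card S \<le> d}. 1)"
    by simp
  also have "\<dots> \<le> (\<Sum>S\<in>{S. S \<subseteq> A \<and> card S \<le> d}. t ^ card S / t ^ d)"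
    using assms by (intro sum_mono) (simp add: power_decreasing)
  also have "\<dots> \<le> (\<Sum>S\<in>Pow A. t ^ card S / t ^ d)"
    using assms by (intro sum_mono2) auto
  also have "\<dots> = (\<Prod>x\<in>A. t + 1) / t ^ d"
    using prod_add[OF assms(1), of "\<lambda>_. t" "\<lambda>_. 1"] by (simp add: sum_divide_distrib)
  finally show ?thesis by (simp add: add.commute)
qed

lemma card_subsets_card_le_pow:
  assumes "finite A" "A \<noteq> {}"
  shows "real (card {S. S \<subseteq> A \<and> card S \<le> d}) \<le> 3 * real (card A) ^ d"
proof -
  define N where "N = real (card A)"
  have "0 < N" using assms by (simp add: N_def card_gt_0_iff)
  have "(1 + 1 / N) ^ card A \<le> exp (1 / N) ^ card A"
    using \<open>0 < N\<close> by (intro power_mono) auto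
  also have "\<dots> = exp (N * (1 / N))"
    unfolding N_def by (rule exp_of_nat_mult[symmetric])
  also have "\<dots> \<le> 3"
    using \<open>0 < N\<close> exp_le by simp
  finally have growth: "(1 + 1 / N) ^ card A \<le> 3" .
  have "real (card {S. S \<subseteq> A \<and> card S \<le> d}) \<le> (1 + 1 / N) ^ card A / (1 / N) ^ d"
    using assms \<open>0 < N\<close> by (intro card_subsets_card_le) (auto simp: N_def)
  also have "\<dots> = (1 + 1 / N) ^ card A * N ^ d"
    by (simp add: power_one_over)
  also have "\<dots> \<le> 3 * N ^ d"
    using growth \<open>0 < N\<close> by (intro mult_right_mono) auto
  finally show ?thesis unfolding N_def .
qed

lemma exp_le_two_powr:
  fixes y :: real
  assumes "0 \<le> y"
  shows "exp y \<le> 2 powr (2 * y)"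
proof -
  have "exp y = exp 1 powr y"
    using exp_powr_real[of 1 y] by simp
  also have "\<dots> \<le> 4 powr y"
    using assms exp_le by (intro powr_mono2) auto
  also have "\<dots> = 2 powr (2 * y)"
    by (simp add: powr_powr[symmetric])
  finally show ?thesis .
qed

lemma card_index_sets_le_powr:
  "real (card (index_sets_le n d)) \<le> 2 powr (2 * real n / 2 ^ k + real (k * d))"
proof -
  have "(1 + 1 / 2 ^ k :: real) ^ n \<le> exp (1 / 2 ^ k) ^ n"
    by (intro power_mono) auto
  also have "\<dots> = exp (real n * (1 / 2 ^ k))"
    by (rule exp_of_nat_mult[symmetric])
  also have "\<dots> \<le> 2 powr (2 * real n / 2 ^ k)"
    using exp_le_two_powr[of "real n / 2 ^ k"] by simp
  finally have growth: "(1 + 1 / 2 ^ k) ^ n \<le> 2 powr (2 * real n / 2 ^ k)" .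
  have "real (card (index_sets_le n d)) \<le> (1 + 1 / 2 ^ k) ^ n / (1 / 2 ^ k) ^ d"
    unfolding index_sets_le_def using card_subsets_card_le[of "{..<n}" "1 / 2 ^ k" d] by simp
  also have "\<dots> = (1 + 1 / 2 ^ k) ^ n * 2 powr real (k * d)"
    by (subst powr_realpow) (simp_all add: power_one_over power_mult)
  also have "\<dots> \<le> 2 powr (2 * real n / 2 ^ k) * 2 powr real (k * d)"
    using growth by (rule mult_right_mono) simp
  finally show ?thesis
    by (simp add: powr_add)
qed

section \<open>Counting testable properties\<close>

lemma finite_cube: "finite (cube n)"
  using finite_lists_length_eq[of "UNIV :: bool set" n] by (simp add: cube_def)

lemma card_cube: "card (cube n) = 2 ^ n"
  using card_lists_length_eq[of "UNIV :: bool set" n] by (simp add: cube_def)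

definition hamming_ball :: "nat \<Rightarrow> real \<Rightarrow> bool list \<Rightarrow> bool list set" where
  "hamming_ball n r y = {x \<in> cube n. real (hamming n x y) \<le> r}"

lemma card_hamming_ball_le: "card (hamming_ball n r y) \<le> card (index_sets_le n (nat \<lfloor>r\<rfloor>))"
proof -
  let ?diff = "\<lambda>x. {i. i < n \<and> x ! i \<noteq> y ! i}"
  have "inj_on ?diff (hamming_ball n r y)"
  proof (rule inj_onI)
    fix x x' assume "x \<in> hamming_ball n r y" "x' \<in> hamming_ball n r y" "?diff x = ?diff x'"
    then show "x = x'"
      by (intro nth_equalityI) (auto simp: hamming_ball_def cube_def set_eq_iff)
  qed
  moreover have "?diff ` hamming_ball n r y \<subseteq> index_sets_le n (nat \<lfloor>r\<rfloor>)"
    by (auto simp: hamming_ball_def index_sets_le_def hamming_def le_nat_floor)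
  ultimately show ?thesis
    using finite_index_sets_le by (rule card_inj_on_le)
qed

lemma cube_degree_le_positive_set:
  fixes f :: "bool list \<Rightarrow> real"
  assumes "cube_degree_le n d f"
  shows "{x \<in> cube n. 0 < f x} \<in> linear_threshold_sets (cube n) (index_sets_le n d) cube_monomial"
proof -
  from assms obtain c where "\<forall>x\<in>cube n. f x = (\<Sum>S\<in>index_sets_le n d. c S * cube_monomial S x)"
    unfolding cube_degree_le_def by blast
  then have "{x \<in> cube n. 0 < f x}
      = {x \<in> cube n. 0 < (\<Sum>S\<in>index_sets_le n d. c S * cube_monomial S x)}"
    by auto
  then show ?thesis
    unfolding linear_threshold_sets_def image_iff by blast
qed

lemma tester_acceptance_region:
  assumes "quantum_tester n P \<epsilon> m U Acc T" "P \<subseteq> cube n" "2 * T \<le> d"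
  obtains S where "S \<in> linear_threshold_sets (cube n) (index_sets_le n d) cube_monomial"
    "P \<subseteq> S" "S \<subseteq> (\<Union>y\<in>P. hamming_ball n (\<epsilon> * real n) y)"
proof
  let ?p = "accept_prob n m U Acc T"
  have "cube_degree_le n d (\<lambda>x. ?p x - 1/2)"
    using cube_degree_le_mono[OF cube_degree_le_accept_prob assms(3)]
    by (rule cube_degree_le_diff[OF _ cube_degree_le_const])
  then show "{x \<in> cube n. 0 < ?p x - 1/2} \<in> linear_threshold_sets (cube n) (index_sets_le n d) cube_monomial"
    by (rule cube_degree_le_positive_set)
  show "P \<subseteq> {x \<in> cube n. 0 < ?p x - 1/2}"
    using assms(1,2) by (force simp: quantum_tester_def)
  show "{x \<in> cube n. 0 < ?p x - 1/2} \<subseteq> (\<Union>y\<in>P. hamming_ball n (\<epsilon> * real n) y)"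
  proof
    fix x assume x: "x \<in> {x \<in> cube n. 0 < ?p x - 1/2}"
    then have "\<not> eps_far n \<epsilon> P x"
      using assms(1) by (force simp: quantum_tester_def)
    then show "x \<in> (\<Union>y\<in>P. hamming_ball n (\<epsilon> * real n) y)"
      using x by (auto simp: eps_far_def hamming_ball_def not_less)
  qed
qed

lemma testable_prop_in_small_threshold_set:
  assumes "P \<in> props_of_size n K" "has_tester_with_queries n P \<epsilon> q"
  obtains S where "S \<in> linear_threshold_sets (cube n) (index_sets_le n (2 * nat \<lfloor>q\<rfloor>)) cube_monomial"
    "P \<subseteq> S" "card S \<le> K * card (index_sets_le n (nat \<lfloor>\<epsilon> * real n\<rfloor>))"
proof -
  obtain m U Acc T where "real T \<le> q" and tester: "quantum_tester n P \<epsilon> m U Acc T"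
    using assms(2) by (auto simp: has_tester_with_queries_def)
  then have queries: "2 * T \<le> 2 * nat \<lfloor>q\<rfloor>"
    by (simp add: le_nat_floor)
  have P: "P \<subseteq> cube n" "card P = K"
    using assms(1) by (auto simp: props_of_size_def)
  obtain S where S: "S \<in> linear_threshold_sets (cube n) (index_sets_le n (2 * nat \<lfloor>q\<rfloor>)) cube_monomial"
    "P \<subseteq> S" "S \<subseteq> (\<Union>y\<in>P. hamming_ball n (\<epsilon> * real n) y)"
    by (rule tester_acceptance_region[OF tester P(1) queries])
  have "finite P"
    using P(1) finite_cube finite_subset by blast
  have "card S \<le> card (\<Union>y\<in>P. hamming_ball n (\<epsilon> * real n) y)"
    using S(3) by (intro card_mono finite_subset[OF _ finite_cube]) (auto simp: hamming_ball_def)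
  also have "\<dots> \<le> (\<Sum>y\<in>P. card (hamming_ball n (\<epsilon> * real n) y))"
    using \<open>finite P\<close> by (rule card_UN_le)
  also have "\<dots> \<le> (\<Sum>y\<in>P. card (index_sets_le n (nat \<lfloor>\<epsilon> * real n\<rfloor>)))"
    by (intro sum_mono card_hamming_ball_le)
  also have "\<dots> = K * card (index_sets_le n (nat \<lfloor>\<epsilon> * real n\<rfloor>))"
    using P(2) by simp
  finally show ?thesis
    using S(1,2) that by blast
qed

lemma card_testable_props_le:
  "card {P \<in> props_of_size n K. has_tester_with_queries n P \<epsilon> q}
     \<le> card (linear_threshold_sets (cube n) (index_sets_le n (2 * nat \<lfloor>q\<rfloor>)) cube_monomial)
       * (K * card (index_sets_le n (nat \<lfloor>\<epsilon> * real n\<rfloor>))) ^ K"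
proof -
  define Thr where "Thr = linear_threshold_sets (cube n) (index_sets_le n (2 * nat \<lfloor>q\<rfloor>)) cube_monomial"
  define M where "M = K * card (index_sets_le n (nat \<lfloor>\<epsilon> * real n\<rfloor>))"
  define Small where "Small = {S \<in> Thr. card S \<le> M}"
  have "Thr \<subseteq> Pow (cube n)"
    by (auto simp: Thr_def linear_threshold_sets_def)
  then have "finite Thr"
    by (rule finite_subset) (simp add: finite_cube)
  then have fin: "finite Small" "\<And>S. S \<in> Small \<Longrightarrow> finite S"
    using finite_cube by (auto simp: Small_def Thr_def linear_threshold_sets_def intro: finite_subset)
  have "{P \<in> props_of_size n K. has_tester_with_queries n P \<epsilon> q} \<subseteq> (\<Union>S\<in>Small. {P. P \<subseteq> S \<and> card P = K})"
  proof
    fix P assume "P \<in> {P \<in> props_of_size n K. has_tester_with_queries n P \<epsilon> q}"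
    then have P: "P \<in> props_of_size n K" "has_tester_with_queries n P \<epsilon> q"
      by auto
    obtain S where "S \<in> Thr" "P \<subseteq> S" "card S \<le> M"
      unfolding Thr_def M_def by (rule testable_prop_in_small_threshold_set[OF P])
    then show "P \<in> (\<Union>S\<in>Small. {P. P \<subseteq> S \<and> card P = K})"
      using P(1) by (auto simp: Small_def props_of_size_def)
  qed
  then have "card {P \<in> props_of_size n K. has_tester_with_queries n P \<epsilon> q}
      \<le> card (\<Union>S\<in>Small. {P. P \<subseteq> S \<and> card P = K})"
    using fin by (intro card_mono) auto
  also have "\<dots> \<le> (\<Sum>S\<in>Small. card {P. P \<subseteq> S \<and> card P = K})"
    using fin(1) by (rule card_UN_le)
  also have "\<dots> \<le> (\<Sum>S\<in>Small. M ^ K)"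
  proof (rule sum_mono)
    fix S assume S: "S \<in> Small"
    have "card {P. P \<subseteq> S \<and> card P = K} = card S choose K"
      using fin(2)[OF S] by (rule n_subsets)
    also have "\<dots> \<le> card S ^ K"
      by (cases "K \<le> card S") (auto simp: binomial_le_pow binomial_eq_0)
    also have "\<dots> \<le> M ^ K"
      using S by (intro power_mono) (auto simp: Small_def)
    finally show "card {P. P \<subseteq> S \<and> card P = K} \<le> M ^ K" .
  qed
  also have "\<dots> \<le> card Thr * M ^ K"
    using \<open>finite Thr\<close> by (simp add: Small_def card_mono)
  finally show ?thesis
    unfolding Thr_def M_def .
qed

lemma testable_fraction_le:
  assumes "0 < K" "K \<le> 2 ^ n"
  shows "real (card {P \<in> props_of_size n K. has_tester_with_queries n P \<epsilon> q})
           / real (card (props_of_size n K))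
         \<le> real (card (linear_threshold_sets (cube n) (index_sets_le n (2 * nat \<lfloor>q\<rfloor>)) cube_monomial))
           * (real K ^ 2 * real (card (index_sets_le n (nat \<lfloor>\<epsilon> * real n\<rfloor>))) / 2 ^ n) ^ K"
proof -
  define T where "T = card (linear_threshold_sets (cube n) (index_sets_le n (2 * nat \<lfloor>q\<rfloor>)) cube_monomial)"
  define B where "B = card (index_sets_le n (nat \<lfloor>\<epsilon> * real n\<rfloor>))"
  have "card (props_of_size n K) = 2 ^ n choose K"
    unfolding props_of_size_def using n_subsets[OF finite_cube, of n K] by (simp add: card_cube)
  then have total: "(2 ^ n / real K) ^ K \<le> real (card (props_of_size n K))"
    using binomial_ge_n_over_k_pow_k[OF assms(2), where 'a = real] by simp
  have "card {P \<in> props_of_size n K. has_tester_with_queries n P \<epsilon> q} \<le> T * (K * B) ^ K"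
    unfolding T_def B_def by (rule card_testable_props_le)
  then have testable: "real (card {P \<in> props_of_size n K. has_tester_with_queries n P \<epsilon> q})
      \<le> real T * (real K * real B) ^ K"
    by (metis of_nat_le_iff of_nat_mult of_nat_power)
  have "real (card {P \<in> props_of_size n K. has_tester_with_queries n P \<epsilon> q})
        / real (card (props_of_size n K))
      \<le> real T * (real K * real B) ^ K / (2 ^ n / real K) ^ K"
    using assms(1) by (intro frac_le[OF _ testable _ total]) auto
  also have "\<dots> = real T * (real K ^ 2 * real B / 2 ^ n) ^ K"
    using assms(1) by (simp add: power_divide power_mult_distrib power2_eq_square)
  finally show ?thesis
    unfolding T_def B_def .
qed

lemma card_threshold_sets_le_powr:
  "real (card (linear_threshold_sets (cube n) (index_sets_le n d) cube_monomial))
     \<le> 3 * 2 powr (real n * real (card (index_sets_le n d)))"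
proof -
  have "cube n \<noteq> {}"
    using card_cube[of n] by auto
  have "card (linear_threshold_sets (cube n) (index_sets_le n d) cube_monomial)
      \<le> card {Y. Y \<subseteq> cube n \<and> card Y \<le> card (index_sets_le n d)}"
    by (rule card_linear_threshold_sets_le[OF finite_cube finite_index_sets_le])
  then have "real (card (linear_threshold_sets (cube n) (index_sets_le n d) cube_monomial))
      \<le> real (card {Y. Y \<subseteq> cube n \<and> card Y \<le> card (index_sets_le n d)})"
    by simp
  also have "\<dots> \<le> 3 * real (card (cube n)) ^ card (index_sets_le n d)"
    using finite_cube \<open>cube n \<noteq> {}\<close> by (rule card_subsets_card_le_pow)
  also have "\<dots> = 3 * 2 powr (real n * real (card (index_sets_le n d)))"
    by (simp add: card_cube powr_powr flip: powr_realpow)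
  finally show ?thesis .
qed

lemma real_div_ge_minus_one:
  assumes "0 < k"
  shows "real n / real k - 1 \<le> real (n div k)"
proof -
  have "real (n mod k) / real k \<le> 1"
    using assms by simp
  then show ?thesis
    using of_nat_of_nat_div_aux[of n k, where 'a = real] by linarith
qed

lemma testable_fraction_le_powr:
  assumes "0 < \<epsilon>" "\<epsilon> \<le> 1/100"
  shows "real (card {P \<in> props_of_size n (2 ^ (n div 20)). has_tester_with_queries n P \<epsilon> (real n / 400)})
           / real (card (props_of_size n (2 ^ (n div 20))))
         \<le> 3 * 2 powr (real n * 2 powr (153 * real n / 3200) - real n / 4 * 2 powr (real n / 20))"
proof -
  define K where "K = (2::nat) ^ (n div 20)"
  define D where "D = card (index_sets_le n (2 * (n div 400)))"
  define B where "B = card (index_sets_le n (nat \<lfloor>\<epsilon> * real n\<rfloor>))"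
  have queries: "nat \<lfloor>real n / 400\<rfloor> = n div 400"
    using floor_divide_of_nat_eq[of n 400, where 'a = real] by simp
  have K_eq: "real K = 2 powr real (n div 20)"
    by (simp add: K_def powr_realpow)
  have "2 powr (real n / 20) / 2 = 2 powr (real n / 20 - 1)"
    by (simp add: powr_diff)
  also have "\<dots> \<le> real K"
    unfolding K_eq using real_div_ge_minus_one[of 20 n] by (intro powr_mono) auto
  finally have K_lower: "2 powr (real n / 20) / 2 \<le> real K" .
  have K_upper: "real K \<le> 2 powr (real n / 20)"
    unfolding K_eq using of_nat_div_le_of_nat[of n 20] by (intro powr_mono) auto
  have "real D \<le> 2 powr (2 * real n / 2 ^ 8 + real (8 * (2 * (n div 400))))"
    unfolding D_def by (rule card_index_sets_le_powr)
  also have "\<dots> \<le> 2 powr (153 * real n / 3200)"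
  proof (rule powr_mono)
    have "real (n div 400) \<le> real n / real (400::nat)"
      by (rule of_nat_div_le_of_nat)
    then show "2 * real n / 2 ^ 8 + real (8 * (2 * (n div 400))) \<le> 153 * real n / 3200"
      by simp
  qed simp
  finally have D: "real D \<le> 2 powr (153 * real n / 3200)" .
  have "real B \<le> 2 powr (2 * real n / 2 ^ 3 + real (3 * nat \<lfloor>\<epsilon> * real n\<rfloor>))"
    unfolding B_def by (rule card_index_sets_le_powr)
  also have "\<dots> \<le> 2 powr (28 * real n / 100)"
  proof (intro powr_mono)
    have "real (nat \<lfloor>\<epsilon> * real n\<rfloor>) \<le> \<epsilon> * real n"
      using assms by (simp add: of_nat_floor)
    also have "\<dots> \<le> real n / 100"
      using mult_right_mono[OF assms(2), of "real n"] by simp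
    finally have "real (nat \<lfloor>\<epsilon> * real n\<rfloor>) \<le> real n / 100" .
    then show "2 * real n / 2 ^ 3 + real (3 * nat \<lfloor>\<epsilon> * real n\<rfloor>) \<le> 28 * real n / 100"
      by simp
  qed simp
  finally have B: "real B \<le> 2 powr (28 * real n / 100)" .
  have "real K ^ 2 * real B / 2 ^ n \<le> (2 powr (real n / 20)) ^ 2 * 2 powr (28 * real n / 100) / 2 powr real n"
    using K_upper B by (intro divide_mono mult_mono power_mono) (simp_all add: powr_realpow)
  also have "\<dots> = 2 powr (- (62 * real n / 100))"
    by (simp add: powr_power powr_add[symmetric] powr_diff[symmetric])
  also have "\<dots> \<le> 2 powr (- real n / 2)"
    by (intro powr_mono) auto
  finally have base: "real K ^ 2 * real B / 2 ^ n \<le> 2 powr (- real n / 2)" .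
  have "real (card {P \<in> props_of_size n K. has_tester_with_queries n P \<epsilon> (real n / 400)})
          / real (card (props_of_size n K))
        \<le> real (card (linear_threshold_sets (cube n) (index_sets_le n (2 * (n div 400))) cube_monomial))
          * (real K ^ 2 * real B / 2 ^ n) ^ K"
    using testable_fraction_le[of K n \<epsilon> "real n / 400"] unfolding queries B_def K_def
    by (simp add: power_increasing)
  also have "\<dots> \<le> (3 * 2 powr (real n * real D)) * (2 powr (- real n / 2)) ^ K"
    unfolding D_def
    by (intro mult_mono card_threshold_sets_le_powr power_mono base) auto
  also have "\<dots> = 3 * (2 powr (real n * real D) * 2 powr (real K * (- real n / 2)))"
    by (simp add: powr_power)
  also have "\<dots> = 3 * 2 powr (real n * real D - real n / 2 * real K)"
    by (subst powr_add[symmetric]) (simp add: algebra_simps)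
  also have "\<dots> \<le> 3 * 2 powr (real n * 2 powr (153 * real n / 3200) - real n / 4 * 2 powr (real n / 20))"
  proof -
    have "real n * real D \<le> real n * 2 powr (153 * real n / 3200)"
      using D by (rule mult_left_mono) simp
    moreover have "real n / 4 * 2 powr (real n / 20) \<le> real n / 2 * real K"
      using mult_left_mono[OF K_lower, of "real n / 2"] by simp
    ultimately show ?thesis
      by (intro mult_left_mono powr_mono) auto
  qed
  finally show ?thesis
    unfolding K_def .
qed

theorem theorem5p1:
  shows "\<exists>\<epsilon>\<^sub>0 > (0::real). \<forall>\<epsilon>. 0 < \<epsilon> \<and> \<epsilon> \<le> \<epsilon>\<^sub>0 \<longrightarrow>
    (\<lambda>n. real (card {P \<in> props_of_size n (2 ^ (n div 20)).
                         has_tester_with_queries n P \<epsilon> (real n / 400)})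
         / real (card (props_of_size n (2 ^ (n div 20)))))
    \<longlonglongrightarrow> 0"
proof (intro exI[of _ "1/100"] conjI allI impI)
  fix \<epsilon> :: real
  assume "0 < \<epsilon> \<and> \<epsilon> \<le> 1/100"
  then have bound: "norm (real (card {P \<in> props_of_size n (2 ^ (n div 20)).
                         has_tester_with_queries n P \<epsilon> (real n / 400)})
         / real (card (props_of_size n (2 ^ (n div 20)))))
      \<le> 3 * 2 powr (real n * 2 powr (153 * real n / 3200) - real n / 4 * 2 powr (real n / 20))" for n
    using testable_fraction_le_powr[of \<epsilon> n] by simp
  have "(\<lambda>n::nat. 3 * 2 powr (real n * 2 powr (153 * real n / 3200)
      - real n / 4 * 2 powr (real n / 20))) \<longlonglongrightarrow> 0"
    by real_asymp
  with bound show "(\<lambda>n. real (card {P \<in> props_of_size n (2 ^ (n div 20)).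
                         has_tester_with_queries n P \<epsilon> (real n / 400)})
         / real (card (props_of_size n (2 ^ (n div 20)))))
    \<longlonglongrightarrow> 0"
    by (rule Lim_null_comparison[OF always_eventually[OF allI]])
qed simp

end
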